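(* Let $N\ge2$, $T>0$, and consider the problem of minimizing $\mathbb V(T)=\frac1N\sum_{i=1}^N\xi_i(T)^2$ over $\alpha\in\mathcal U_{FS}$, where $\dot\xi_i=-\xi_i+(1-\alpha_i)\bar\xi$, $\bar\xi=\frac1N\sum_j\xi_j$, with initial datum satisfying $\bar\xi(0)>0$ and $\xi_1(0)\ge\dots\ge\xi_N(0)$. The control which at each time $t$ splits the total strength $1$ evenly among the agents $i$ with $\xi_i(t)=\max_j\xi_j(t)$ (and sets $\alpha_i(t)=0$ for the others) is optimal for this problem. Explicitly: let $\bar\xi_{1,l}=\frac1l\sum_{i=1}^l\xi_i$, $t_1=0$ and, for $l\in\{2,\dots,N\}$, $$t_l=\frac{N}{N-1}\ln\Big((l-1)\frac{N-1}{N}\,\frac{\bar\xi_{1,l-1}(0)-\xi_l(0)}{\bar\xi(0)}+1\Big).$$ If $T\in[t_l,t_{l+1})$ for some $l\in\{1,\dots,N-1\}$, then any control in $\mathcal U_{FS}$ satisfying $\xi_i(T)=\bar\xi_{1,l}(T)$ for every $i\le l$, $\sum_{i=1}^l\alpha_i\equiv1$ and $\alpha_i\equiv0$ for every $i\ge l+1$ is optimal. If $T\ge t_N$, then any control in $\mathcal U_{FS}$ with $\xi_i(T)=\bar\xi(T)$ for all $i$ (and $\sum_i\alpha_i\equiv1$) is optimal. For instance, if $T\in[t_l,t_{l+1})$, the piecewise constant control defined for $k\le l$ and $t\in[t_k,t_{k+1})$ by $\alpha_i(t)=1/k$ for $i\le k$ and $\alpha_i(t)=0$ for $i>k$ is 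optimal.
   Context: $\mathcal U_{FS}$ is the set of measurable $\alpha:[0,T]\to[0,1]^N$ with $\sum_{i=1}^N\alpha_i(t)=1$ for all $t\in[0,T]$ ("full-strength" controls). The $\xi_i$ are projected velocities in a collective migration model with target velocity $0$. *)

theory Defs
  imports "HOL-Analysis.Analysis"
begin

text \<open>Agents are indexed by 1..N. A state is a function nat => real (only indices 1..N matter).
  A control alpha and a trajectory xi are functions of time t and agent index i.\<close>

definition full_strength :: "nat \<Rightarrow> real \<Rightarrow> (real \<Rightarrow> nat \<Rightarrow> real) \<Rightarrow> bool" where
  "full_strength N T \<alpha> \<longleftrightarrow>
     (\<forall>i\<in>{1..N}. (\<lambda>t. \<alpha> t i) \<in> borel_measurable (restrict_space lborel {0..T})) \<and>
     (\<forall>t\<in>{0..T}. (\<forall>i\<in>{1..N}. 0 \<le> \<alpha> t i \<and> \<alpha> t i \<le> 1) \<and> (\<Sum>i=1..N. \<alpha> t i) = 1)"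

definition pmean :: "nat \<Rightarrow> (nat \<Rightarrow> real) \<Rightarrow> real" where
  "pmean l x = (\<Sum>i=1..l. x i) / real l"

text \<open>Solution (in the Caratheodory / integral sense) on [0,T] of
  xi_i' = - xi_i + (1 - alpha_i) xibar, xibar = (1/N) sum_j xi_j.\<close>
definition solves :: "nat \<Rightarrow> real \<Rightarrow> (real \<Rightarrow> nat \<Rightarrow> real) \<Rightarrow> (real \<Rightarrow> nat \<Rightarrow> real) \<Rightarrow> bool" where
  "solves N T \<alpha> \<xi> \<longleftrightarrow>
     (\<forall>t\<in>{0..T}. \<forall>i\<in>{1..N}.
        ((\<lambda>s. - \<xi> s i + (1 - \<alpha> s i) * pmean N (\<xi> s)) has_integral (\<xi> t i - \<xi> 0 i)) {0..t})"

definition Vfun :: "nat \<Rightarrow> (nat \<Rightarrow> real) \<Rightarrow> real" where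
  "Vfun N x = (\<Sum>i=1..N. (x i)^2) / real N"

definition optimal :: "nat \<Rightarrow> real \<Rightarrow> (nat \<Rightarrow> real) \<Rightarrow> (real \<Rightarrow> nat \<Rightarrow> real) \<Rightarrow> (real \<Rightarrow> nat \<Rightarrow> real) \<Rightarrow> bool" where
  "optimal N T \<xi>0 \<alpha> \<xi> \<longleftrightarrow>
     full_strength N T \<alpha> \<and> solves N T \<alpha> \<xi> \<and> (\<forall>i\<in>{1..N}. \<xi> 0 i = \<xi>0 i) \<and>
     (\<forall>\<alpha>' \<xi>'. full_strength N T \<alpha>' \<and> solves N T \<alpha>' \<xi>' \<and> (\<forall>i\<in>{1..N}. \<xi>' 0 i = \<xi>0 i)
        \<longrightarrow> Vfun N (\<xi> T) \<le> Vfun N (\<xi>' T))"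

definition tsw :: "nat \<Rightarrow> (nat \<Rightarrow> real) \<Rightarrow> nat \<Rightarrow> real" where
  "tsw N \<xi>0 l = (if l \<le> 1 then 0 else
     real N / (real N - 1) * ln (real (l - 1) * ((real N - 1) / real N)
        * ((pmean (l - 1) \<xi>0 - \<xi>0 l) / pmean N \<xi>0) + 1))"

definition greedy :: "nat \<Rightarrow> (nat \<Rightarrow> real) \<Rightarrow> real \<Rightarrow> nat \<Rightarrow> real" where
  "greedy N \<xi>0 t i = (let k = Max {l\<in>{1..N}. tsw N \<xi>0 l \<le> t} in
      if 1 \<le> i \<and> i \<le> k then 1 / real k else 0)"

end

theory Submission
  imports Defs
begin

text \<open>Whatever the control, the mean velocity decays like \<open>e\<^sup>-\<^sup>t\<^sup>/\<^sup>N\<close> and every \<open>\<xi>\<^sub>i\<close> stays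
  below its free trajectory, the solution with \<open>\<alpha>\<^sub>i \<equiv> 0\<close>. Minimising \<open>\<Sum> \<xi>\<^sub>i(T)\<^sup>2\<close> under a
  fixed sum and these upper bounds is a water-filling problem: a terminal profile that equals a
  common level \<open>w\<close> on some agents and the free value \<open>\<le> w\<close> on the others is optimal. The
  switching time \<open>t\<^sub>l\<close> is exactly when the free trajectory of agent \<open>l\<close> meets the level of the
  group \<open>1..l\<close> whose other members are controlled, so controls that keep the leading group merged
  and leave the rest free produce such a profile; the greedy control is one of them.\<close>

lemma indefinite_integral_nonneg_invariant:
  fixes u h :: "real \<Rightarrow> real"
  assumes u_eq: "\<forall>t\<in>{0..T}. (h has_integral u t) {0..t}"
    and h_nonneg: "\<forall>r\<in>{0..T}. u r \<le> 0 \<longrightarrow> 0 \<le> h r"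
  shows "\<forall>t\<in>{0..T}. 0 \<le> u t"
proof (rule ccontr)
  assume "\<not> (\<forall>t\<in>{0..T}. 0 \<le> u t)"
  then obtain t1 where t1: "t1 \<in> {0..T}" "u t1 < 0" by force
  have h_int: "h integrable_on {0..t1}" using u_eq t1 by blast
  have u_integral: "u t = integral {0..t} h" if "t \<in> {0..t1}" for t
    using u_eq that t1 integral_unique by (metis atLeastAtMost_iff order_trans)
  have "continuous_on {0..t1} u"
    using continuous_on_eq[OF indefinite_integral_continuous_1[OF h_int]] u_integral by auto
  moreover have "u 0 = 0" using u_integral t1 by auto
  txt \<open>The last zero \<open>t0\<close> of \<open>u\<close> before \<open>t1\<close>: on \<open>(t0, t1]\<close> we have \<open>u < 0\<close>, hence \<open>h \<ge> 0\<close>.\<close>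
  ultimately obtain t0 where t0: "t0 \<in> {0..t1}" "0 \<le> u t0"
      and neg: "\<And>r. t0 < r \<Longrightarrow> r \<le> t1 \<Longrightarrow> u r < 0"
  proof -
    define Z where "Z = {0..t1} \<inter> u -` {0..}"
    have "closed Z" unfolding Z_def
      by (rule continuous_closed_preimage[OF \<open>continuous_on {0..t1} u\<close>]) auto
    moreover have "0 \<in> Z" "bdd_above Z" using \<open>u 0 = 0\<close> t1 by (auto simp: Z_def)
    ultimately have Sup_in: "Sup Z \<in> Z" and Sup_ge: "\<And>r. r \<in> Z \<Longrightarrow> r \<le> Sup Z"
      using closed_contains_Sup cSup_upper by blast+
    have "u r < 0" if "Sup Z < r" "r \<le> t1" for r
    proof (rule ccontr)
      assume "\<not> u r < 0"
      moreover have "0 \<le> r" using Sup_ge[OF \<open>0 \<in> Z\<close>] that by linarith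
      ultimately have "r \<in> Z" using that by (auto simp: Z_def)
      with that Sup_ge show False by fastforce
    qed
    with Sup_in show thesis by (intro that[of "Sup Z"]) (auto simp: Z_def)
  qed
  have "(h has_integral integral {t0..t1} h) {t0..t1}"
    using integrable_subinterval_real[OF h_int, of t0 t1] t0 by (auto intro: integrable_integral)
  then have "((\<lambda>r. if r = t0 then 0 else h r) has_integral integral {t0..t1} h) {t0..t1}"
    using has_integral_spike_finite_eq[of "{t0}" "{t0..t1}" "\<lambda>r. if r = t0 then 0 else h r" h]
    by auto
  then have "0 \<le> integral {t0..t1} h"
  proof (rule has_integral_nonneg)
    fix r assume "r \<in> {t0..t1}"
    with neg[of r] t0 t1 show "0 \<le> (if r = t0 then 0 else h r)"
      using h_nonneg by (cases "r = t0") auto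
  qed
  moreover have "integral {0..t0} h + integral {t0..t1} h = integral {0..t1} h"
    using Henstock_Kurzweil_Integration.integral_combine[OF _ _ h_int] t0 by auto
  moreover have "u t1 = integral {0..t1} h" "u t0 = integral {0..t0} h"
    using u_integral t0 t1 by auto
  ultimately show False using t0 t1 by linarith
qed

lemma linear_integral_equation_eq_0:
  fixes u :: "real \<Rightarrow> real"
  assumes "0 \<le> c" and u_eq: "\<forall>t\<in>{0..T}. ((\<lambda>s. - c * u s) has_integral u t) {0..t}"
  shows "\<forall>t\<in>{0..T}. u t = 0"
proof -
  have "\<forall>t\<in>{0..T}. 0 \<le> u t"
    by (rule indefinite_integral_nonneg_invariant[OF u_eq])
      (use \<open>0 \<le> c\<close> in \<open>auto simp: mult_nonneg_nonpos\<close>)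
  moreover have "\<forall>t\<in>{0..T}. 0 \<le> - u t"
  proof (rule indefinite_integral_nonneg_invariant)
    show "\<forall>t\<in>{0..T}. ((\<lambda>s. - c * - u s) has_integral - u t) {0..t}"
      using u_eq has_integral_neg[of "\<lambda>s. - c * u s"] by simp
  qed (use \<open>0 \<le> c\<close> in \<open>auto simp: mult_nonneg_nonneg\<close>)
  ultimately show ?thesis by force
qed

lemma has_integral_of_real_derivative:
  fixes f f' :: "real \<Rightarrow> real"
  assumes "\<And>x. (f has_real_derivative f' x) (at x)" and "a \<le> b"
  shows "(f' has_integral (f b - f a)) {a..b}"
  by (rule fundamental_theorem_of_calculus[OF \<open>a \<le> b\<close>])
    (use assms(1) in \<open>auto simp: has_real_derivative_iff_has_vector_derivative[symmetric]
      intro: has_field_derivative_at_within\<close>)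

lemma sum_atLeastAtMost_split:
  fixes f :: "nat \<Rightarrow> 'a::comm_monoid_add"
  assumes "m \<le> Suc n" and "n \<le> p"
  shows "sum f {m..p} = sum f {m..n} + sum f {Suc n..p}"
  using sum.ub_add_nat[of m n f "p - n"] assms by simp

abbreviation admissible ::
    "nat \<Rightarrow> real \<Rightarrow> (nat \<Rightarrow> real) \<Rightarrow> (real \<Rightarrow> nat \<Rightarrow> real) \<Rightarrow> (real \<Rightarrow> nat \<Rightarrow> real) \<Rightarrow> bool"
  where "admissible N T x0 \<alpha> \<xi> \<equiv>
    full_strength N T \<alpha> \<and> solves N T \<alpha> \<xi> \<and> (\<forall>i\<in>{1..N}. \<xi> 0 i = x0 i)"

definition mean_sol :: "nat \<Rightarrow> (nat \<Rightarrow> real) \<Rightarrow> real \<Rightarrow> real" where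
  "mean_sol N x0 t = pmean N x0 * exp (- t / real N)"

text \<open>The solution of \<open>\<xi>\<^sub>i' = - \<xi>\<^sub>i + mean_sol\<close>, i.e. the trajectory of agent \<open>i\<close> under \<open>\<alpha>\<^sub>i \<equiv> 0\<close>.\<close>
definition free_sol :: "nat \<Rightarrow> (nat \<Rightarrow> real) \<Rightarrow> nat \<Rightarrow> real \<Rightarrow> real" where
  "free_sol N x0 i t =
    exp (- t) * x0 i + pmean N x0 * real N / (real N - 1) * (exp (- t / real N) - exp (- t))"

lemma mean_sol_has_real_derivative:
  assumes "0 < N"
  shows "(mean_sol N x0 has_real_derivative - mean_sol N x0 t / real N) (at t)"
proof -
  have "((\<lambda>t. pmean N x0 * exp (- t / real N)) has_real_derivative
      pmean N x0 * (exp (- t / real N) * (- 1 / real N))) (at t)"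
    using assms by (auto intro!: derivative_eq_intros)
  then show ?thesis unfolding mean_sol_def[abs_def] by simp
qed

lemma free_sol_has_real_derivative:
  assumes "2 \<le> N"
  shows "(free_sol N x0 i has_real_derivative - free_sol N x0 i t + mean_sol N x0 t) (at t)"
proof -
  define c where "c = pmean N x0 * real N / (real N - 1)"
  have free_sol_eq: "free_sol N x0 i = (\<lambda>t. exp (- t) * x0 i + c * (exp (- t / real N) - exp (- t)))"
    by (simp add: fun_eq_iff free_sol_def c_def)
  have m: "pmean N x0 = c * (1 - 1 / real N)"
    using assms unfolding c_def by (simp add: field_simps)
  have "(free_sol N x0 i has_real_derivative
      exp (- t) * (- 1) * x0 i + c * (exp (- t / real N) * (- 1 / real N) - exp (- t) * (- 1))) (at t)"
    unfolding free_sol_eq using assms by (auto intro!: derivative_eq_intros)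
  moreover have "exp (- t) * (- 1) * x0 i + c * (exp (- t / real N) * (- 1 / real N) - exp (- t) * (- 1))
      = - free_sol N x0 i t + mean_sol N x0 t"
    unfolding free_sol_eq mean_sol_def m by (simp add: algebra_simps)
  ultimately show ?thesis by simp
qed

lemma solves_pmean_eq_mean_sol:
  assumes "0 < N" and "admissible N T x0 \<alpha> \<xi>" and "t \<in> {0..T}"
  shows "pmean N (\<xi> t) = mean_sol N x0 t"
proof -
  have N: "real N \<noteq> 0" using \<open>0 < N\<close> by simp
  txt \<open>Summing the equations over \<open>i\<close> and using \<open>\<Sum>\<^sub>i \<alpha>\<^sub>i = 1\<close> gives \<open>pmean' = - pmean / N\<close>.\<close>
  have pmean_eq: "((\<lambda>s. - pmean N (\<xi> s) / real N) has_integral (pmean N (\<xi> t) - pmean N x0)) {0..t}"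
    if t: "t \<in> {0..T}" for t
  proof -
    have "((\<lambda>s. \<Sum>i=1..N. - \<xi> s i + (1 - \<alpha> s i) * pmean N (\<xi> s))
        has_integral (\<Sum>i=1..N. \<xi> t i - \<xi> 0 i)) {0..t}"
      using assms(2) t unfolding solves_def by (intro has_integral_sum) auto
    moreover have "(\<Sum>i=1..N. - \<xi> s i + (1 - \<alpha> s i) * pmean N (\<xi> s)) = - pmean N (\<xi> s)"
      if "s \<in> {0..t}" for s
    proof -
      have "(\<Sum>i=1..N. \<alpha> s i) = 1" using assms(2) that t unfolding full_strength_def by auto
      moreover have "(\<Sum>i=1..N. \<xi> s i) = real N * pmean N (\<xi> s)"
        using N unfolding pmean_def by simp
      ultimately show ?thesis
        by (simp add: sum.distrib sum_subtractf sum_negf left_diff_distrib sum_distrib_right[symmetric])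
    qed
    moreover have "(\<Sum>i=1..N. \<xi> t i - \<xi> 0 i) = real N * (pmean N (\<xi> t) - pmean N x0)"
      using assms(2) N by (simp add: sum_subtractf pmean_def right_diff_distrib)
    ultimately have "((\<lambda>s. - pmean N (\<xi> s)) has_integral real N * (pmean N (\<xi> t) - pmean N x0)) {0..t}"
      using has_integral_eq by (smt (verit))
    from has_integral_mult_right[OF this, of "1 / real N"] show ?thesis using N by simp
  qed
  have "\<forall>t\<in>{0..T}. pmean N (\<xi> t) - mean_sol N x0 t = 0"
  proof (rule linear_integral_equation_eq_0[where c = "1 / real N"])
    show "\<forall>t\<in>{0..T}. ((\<lambda>s. - (1 / real N) * (pmean N (\<xi> s) - mean_sol N x0 s))
        has_integral pmean N (\<xi> t) - mean_sol N x0 t) {0..t}"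
      using has_integral_diff[OF pmean_eq has_integral_of_real_derivative[OF
          mean_sol_has_real_derivative[OF \<open>0 < N\<close>, of x0]]]
      by (auto simp: mean_sol_def diff_divide_distrib)
  qed simp
  then show ?thesis using \<open>t \<in> {0..T}\<close> by simp
qed

lemma free_sol_minus_solves_has_integral:
  assumes "2 \<le> N" and adm: "admissible N T x0 \<alpha> \<xi>" and i: "i \<in> {1..N}" and t: "t \<in> {0..T}"
  shows "((\<lambda>s. - (free_sol N x0 i s - \<xi> s i) + \<alpha> s i * mean_sol N x0 s)
    has_integral (free_sol N x0 i t - \<xi> t i)) {0..t}"
proof -
  have "((\<lambda>s. - free_sol N x0 i s + mean_sol N x0 s) has_integral free_sol N x0 i t - free_sol N x0 i 0) {0..t}"
    using has_integral_of_real_derivative[OF free_sol_has_real_derivative[OF \<open>2 \<le> N\<close>, of x0 i], of 0 t] t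
    by simp
  moreover have "((\<lambda>s. - \<xi> s i + (1 - \<alpha> s i) * pmean N (\<xi> s)) has_integral \<xi> t i - \<xi> 0 i) {0..t}"
    using conjunct1[OF conjunct2[OF adm]] i t unfolding solves_def by blast
  ultimately have "((\<lambda>s. (- free_sol N x0 i s + mean_sol N x0 s) - (- \<xi> s i + (1 - \<alpha> s i) * pmean N (\<xi> s)))
      has_integral (free_sol N x0 i t - free_sol N x0 i 0) - (\<xi> t i - \<xi> 0 i)) {0..t}"
    by (rule has_integral_diff)
  moreover have "free_sol N x0 i 0 = \<xi> 0 i" using adm i by (simp add: free_sol_def)
  ultimately have diff: "((\<lambda>s. (- free_sol N x0 i s + mean_sol N x0 s) - (- \<xi> s i + (1 - \<alpha> s i) * pmean N (\<xi> s)))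
      has_integral (free_sol N x0 i t - \<xi> t i)) {0..t}"
    by simp
  show ?thesis
  proof (rule has_integral_eq[OF _ diff])
    fix s assume "s \<in> {0..t}"
    then have "pmean N (\<xi> s) = mean_sol N x0 s"
      using solves_pmean_eq_mean_sol[OF _ adm, of s] \<open>2 \<le> N\<close> t by simp
    then show "(- free_sol N x0 i s + mean_sol N x0 s) - (- \<xi> s i + (1 - \<alpha> s i) * pmean N (\<xi> s))
      = - (free_sol N x0 i s - \<xi> s i) + \<alpha> s i * mean_sol N x0 s"
      by (simp add: algebra_simps)
  qed
qed

lemma solves_le_free_sol:
  assumes "2 \<le> N" and "0 \<le> pmean N x0" and adm: "admissible N T x0 \<alpha> \<xi>"
    and "i \<in> {1..N}" and "t \<in> {0..T}"
  shows "\<xi> t i \<le> free_sol N x0 i t"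
proof -
  have "\<forall>t\<in>{0..T}. 0 \<le> free_sol N x0 i t - \<xi> t i"
  proof (rule indefinite_integral_nonneg_invariant
      [where h = "\<lambda>s. - (free_sol N x0 i s - \<xi> s i) + \<alpha> s i * mean_sol N x0 s"])
    show "\<forall>t\<in>{0..T}. ((\<lambda>s. - (free_sol N x0 i s - \<xi> s i) + \<alpha> s i * mean_sol N x0 s)
        has_integral free_sol N x0 i t - \<xi> t i) {0..t}"
      by (intro ballI free_sol_minus_solves_has_integral[OF assms(1,3,4)])
    have "0 \<le> \<alpha> s i" if "s \<in> {0..T}" for s
      using conjunct1[OF adm] that \<open>i \<in> {1..N}\<close> unfolding full_strength_def by auto
    moreover have "0 \<le> mean_sol N x0 s" for s
      using \<open>0 \<le> pmean N x0\<close> unfolding mean_sol_def by simp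
    ultimately show "\<forall>r\<in>{0..T}. free_sol N x0 i r - \<xi> r i \<le> 0 \<longrightarrow>
        0 \<le> - (free_sol N x0 i r - \<xi> r i) + \<alpha> r i * mean_sol N x0 r"
      by (intro ballI impI add_nonneg_nonneg) auto
  qed
  then show ?thesis using \<open>t \<in> {0..T}\<close> by simp
qed

lemma solves_eq_free_sol:
  assumes "2 \<le> N" and adm: "admissible N T x0 \<alpha> \<xi>" and "i \<in> {1..N}"
    and free: "\<forall>s\<in>{0..T}. \<alpha> s i = 0" and "t \<in> {0..T}"
  shows "\<xi> t i = free_sol N x0 i t"
proof -
  have "\<forall>t\<in>{0..T}. free_sol N x0 i t - \<xi> t i = 0"
  proof (rule linear_integral_equation_eq_0[where c = 1], simp, intro ballI)
    fix t assume t: "t \<in> {0..T}"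
    show "((\<lambda>s. - 1 * (free_sol N x0 i s - \<xi> s i)) has_integral free_sol N x0 i t - \<xi> t i) {0..t}"
      by (rule has_integral_eq[OF _ free_sol_minus_solves_has_integral[OF assms(1-3) t]])
        (use free t in auto)
  qed
  then show ?thesis using \<open>t \<in> {0..T}\<close> by simp
qed

lemma sum_squares_le_water_filling:
  fixes x y :: "'a \<Rightarrow> real"
  assumes "finite I" and "sum y I = sum x I"
    and filling: "\<And>i. i \<in> I \<Longrightarrow> x i = w \<or> (y i \<le> x i \<and> x i \<le> w)"
  shows "(\<Sum>i\<in>I. (x i)\<^sup>2) \<le> (\<Sum>i\<in>I. (y i)\<^sup>2)"
proof -
  have "2 * w * (y i - x i) \<le> (y i)\<^sup>2 - (x i)\<^sup>2" if "i \<in> I" for i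
  proof (cases "x i = w")
    case True
    have "0 \<le> (y i - w)\<^sup>2" by simp
    with True show ?thesis by (simp add: power2_eq_square algebra_simps)
  next
    case False
    with filling[OF that] have "0 \<le> (y i - x i) * (y i + x i - 2 * w)"
      by (intro mult_nonpos_nonpos) auto
    then show ?thesis by (simp add: power2_eq_square algebra_simps)
  qed
  then have "(\<Sum>i\<in>I. 2 * w * (y i - x i)) \<le> (\<Sum>i\<in>I. (y i)\<^sup>2 - (x i)\<^sup>2)"
    by (rule sum_mono)
  moreover have "(\<Sum>i\<in>I. 2 * w * (y i - x i)) = 0"
    using \<open>sum y I = sum x I\<close> by (simp add: sum_distrib_left[symmetric] sum_subtractf)
  ultimately show ?thesis by (simp add: sum_subtractf)
qed

lemma optimal_if_water_filling:
  assumes "2 \<le> N" and "0 \<le> pmean N x0" and "0 \<le> T" and adm: "admissible N T x0 \<alpha> \<xi>"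
    and filling: "\<And>i. i \<in> {1..N} \<Longrightarrow>
      \<xi> T i = w \<or> (\<xi> T i = free_sol N x0 i T \<and> free_sol N x0 i T \<le> w)"
  shows "optimal N T x0 \<alpha> \<xi>"
  unfolding optimal_def
proof (intro conjI allI impI)
  show "full_strength N T \<alpha>" "solves N T \<alpha> \<xi>" "\<forall>i\<in>{1..N}. \<xi> 0 i = x0 i" using adm by auto
  fix \<alpha>' \<xi>' assume adm': "admissible N T x0 \<alpha>' \<xi>'"
  have T: "T \<in> {0..T}" using \<open>0 \<le> T\<close> by simp
  have "pmean N (\<xi>' T) = pmean N (\<xi> T)"
    using solves_pmean_eq_mean_sol[OF _ adm T] solves_pmean_eq_mean_sol[OF _ adm' T] \<open>2 \<le> N\<close>
    by simp
  then have "(\<Sum>i=1..N. \<xi>' T i) = (\<Sum>i=1..N. \<xi> T i)"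
    using \<open>2 \<le> N\<close> by (simp add: pmean_def)
  moreover have "\<xi> T i = w \<or> (\<xi>' T i \<le> \<xi> T i \<and> \<xi> T i \<le> w)" if "i \<in> {1..N}" for i
    using filling[OF that] solves_le_free_sol[OF assms(1,2) adm' that T] by auto
  ultimately have "(\<Sum>i=1..N. (\<xi> T i)\<^sup>2) \<le> (\<Sum>i=1..N. (\<xi>' T i)\<^sup>2)"
    by (intro sum_squares_le_water_filling[where w = w]) auto
  then show "Vfun N (\<xi> T) \<le> Vfun N (\<xi>' T)"
    unfolding Vfun_def by (simp add: divide_right_mono)
qed

text \<open>The common value of agents \<open>1..k\<close> when agents \<open>k+1..N\<close> are free and the mean is \<open>mean_sol\<close>.\<close>
definition level :: "nat \<Rightarrow> (nat \<Rightarrow> real) \<Rightarrow> nat \<Rightarrow> real \<Rightarrow> real" where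
  "level N x0 k t = (real N * mean_sol N x0 t - (\<Sum>j=Suc k..N. free_sol N x0 j t)) / real k"

lemma of_nat_mult_level:
  assumes "1 \<le> k"
  shows "real k * level N x0 k t = real N * mean_sol N x0 t - (\<Sum>j=Suc k..N. free_sol N x0 j t)"
  using assms by (simp add: level_def)

definition switch_arg :: "nat \<Rightarrow> (nat \<Rightarrow> real) \<Rightarrow> nat \<Rightarrow> real" where
  "switch_arg N x0 l = (real N - 1) / real N * (\<Sum>j=1..l-1. x0 j - x0 l) / pmean N x0 + 1"

lemma tsw_eq_ln:
  assumes "1 \<le> l"
  shows "tsw N x0 l = real N / (real N - 1) * ln (switch_arg N x0 l)"
proof (cases "l = 1")
  case False
  then have "real (l - 1) \<noteq> 0" using assms by simp
  then have sum_eq: "real (l - 1) * (pmean (l - 1) x0 - x0 l) = (\<Sum>j=1..l-1. x0 j - x0 l)"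
    by (simp add: pmean_def sum_subtractf right_diff_distrib)
  have "tsw N x0 l = real N / (real N - 1)
      * ln (real (l - 1) * ((real N - 1) / real N) * ((pmean (l - 1) x0 - x0 l) / pmean N x0) + 1)"
    using False by (simp add: tsw_def)
  also have "real (l - 1) * ((real N - 1) / real N) * ((pmean (l - 1) x0 - x0 l) / pmean N x0)
      = (real N - 1) / real N * (real (l - 1) * (pmean (l - 1) x0 - x0 l)) / pmean N x0"
    by simp
  also note sum_eq
  finally show ?thesis unfolding switch_arg_def .
qed (simp add: tsw_def switch_arg_def)

lemma
  assumes "2 \<le> N" and "1 \<le> l" and "0 < switch_arg N x0 l"
  shows tsw_le_iff: "tsw N x0 l \<le> t \<longleftrightarrow> switch_arg N x0 l \<le> exp ((real N - 1) * t / real N)"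
    and le_tsw_iff: "t \<le> tsw N x0 l \<longleftrightarrow> exp ((real N - 1) * t / real N) \<le> switch_arg N x0 l"
proof -
  have "0 < real N - 1" using assms(1) by simp
  then have "tsw N x0 l \<le> t \<longleftrightarrow> ln (switch_arg N x0 l) \<le> (real N - 1) * t / real N"
    "t \<le> tsw N x0 l \<longleftrightarrow> (real N - 1) * t / real N \<le> ln (switch_arg N x0 l)"
    unfolding tsw_eq_ln[OF assms(2)] using assms(1) by (simp_all add: field_simps)
  then show "tsw N x0 l \<le> t \<longleftrightarrow> switch_arg N x0 l \<le> exp ((real N - 1) * t / real N)"
    and "t \<le> tsw N x0 l \<longleftrightarrow> exp ((real N - 1) * t / real N) \<le> switch_arg N x0 l"
    using assms(3) ln_le_cancel_iff[of "switch_arg N x0 l" "exp ((real N - 1) * t / real N)"]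
      ln_ge_iff[of "switch_arg N x0 l"] by simp_all
qed

text \<open>For \<open>l \<ge> 1\<close> the left-hand side is \<open>l * (free_sol (l+1) - level l)\<close>; its sign changes
  exactly at \<open>t\<^sub>l\<^sub>+\<^sub>1\<close>.\<close>
lemma free_sol_excess_eq:
  assumes "2 \<le> N" and "l < N" and "pmean N x0 \<noteq> 0"
  shows "real l * free_sol N x0 (Suc l) t + (\<Sum>i=Suc l..N. free_sol N x0 i t) - real N * mean_sol N x0 t
    = exp (- t) * (real N * pmean N x0 / (real N - 1))
      * (exp ((real N - 1) * t / real N) - switch_arg N x0 (Suc l))"
proof -
  define m where "m = pmean N x0"
  define K where "K = m * real N / (real N - 1) * (exp (- t / real N) - exp (- t))"
  define D where "D = (\<Sum>j=1..l. x0 j - x0 (Suc l))"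
  have N: "real N \<noteq> 0" "real N - 1 \<noteq> 0" using assms(1) by auto
  have free: "free_sol N x0 i t = exp (- t) * x0 i + K" for i
    unfolding free_sol_def K_def m_def by simp
  have "(\<Sum>i=1..N. x0 i) = real N * m" using N unfolding m_def pmean_def by simp
  then have tail: "(\<Sum>i=Suc l..N. x0 i) = real N * m - (\<Sum>j=1..l. x0 j)"
    using sum_atLeastAtMost_split[of 1 l N x0] assms(2) by simp
  have D_eq: "D = (\<Sum>j=1..l. x0 j) - real l * x0 (Suc l)"
    unfolding D_def by (simp add: sum_subtractf)
  have "real l * free_sol N x0 (Suc l) t + (\<Sum>i=Suc l..N. free_sol N x0 i t) - real N * mean_sol N x0 t
      = real l * (exp (- t) * x0 (Suc l) + K) + (exp (- t) * (\<Sum>i=Suc l..N. x0 i) + (real N - real l) * K)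
        - real N * (m * exp (- t / real N))"
    using assms(2) unfolding free mean_sol_def m_def
    by (simp add: sum.distrib sum_distrib_left of_nat_diff)
  also have "\<dots> = exp (- t) * (real N * m - D) + real N * K - real N * m * exp (- t / real N)"
    unfolding tail D_eq by (simp add: algebra_simps)
  also have "\<dots> = exp (- t) * (real N * m / (real N - 1))
      * (exp ((real N - 1) * t / real N) - switch_arg N x0 (Suc l))"
  proof -
    have "exp ((real N - 1) * t / real N) * exp (- t) = exp (- t / real N)"
      unfolding exp_add[symmetric] using N by (simp add: field_simps)
    then show ?thesis
      using N assms(3) unfolding K_def switch_arg_def D_def m_def[symmetric]
      by (simp add: field_simps)
  qed
  finally show ?thesis unfolding m_def .
qed

lemma level_has_real_derivative:
  assumes "2 \<le> N" and k: "k \<in> {1..N}"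
  shows "(level N x0 k has_real_derivative - level N x0 k t + (1 - 1 / real k) * mean_sol N x0 t) (at t)"
proof -
  have "(level N x0 k has_real_derivative
      (real N * (- mean_sol N x0 t / real N) - (\<Sum>j=Suc k..N. - free_sol N x0 j t + mean_sol N x0 t))
        / real k) (at t)"
    unfolding level_def[abs_def] using assms mean_sol_has_real_derivative free_sol_has_real_derivative
    by (intro DERIV_cdivide DERIV_diff DERIV_cmult DERIV_sum) auto
  moreover have sum_eq: "(\<Sum>j=Suc k..N. - free_sol N x0 j t + mean_sol N x0 t)
      = (real N - real k) * mean_sol N x0 t - (\<Sum>j=Suc k..N. free_sol N x0 j t)"
    using k by (simp add: sum_subtractf of_nat_diff)
  have "(real N * (- mean_sol N x0 t / real N) - (\<Sum>j=Suc k..N. - free_sol N x0 j t + mean_sol N x0 t))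
        / real k = - level N x0 k t + (1 - 1 / real k) * mean_sol N x0 t"
    using assms unfolding sum_eq level_def by (simp add: field_simps)
  ultimately show ?thesis by simp
qed

definition active_count :: "nat \<Rightarrow> (nat \<Rightarrow> real) \<Rightarrow> real \<Rightarrow> nat" where
  "active_count N x0 t = Max {l\<in>{1..N}. tsw N x0 l \<le> t}"

lemma greedy_eq_active_count:
  "greedy N x0 t i = (if 1 \<le> i \<and> i \<le> active_count N x0 t then 1 / real (active_count N x0 t) else 0)"
  unfolding greedy_def active_count_def by (simp add: Let_def)

definition water_level :: "nat \<Rightarrow> (nat \<Rightarrow> real) \<Rightarrow> real \<Rightarrow> real" where
  "water_level N x0 t = Max ((\<lambda>k. level N x0 k t) ` {1..N})"

text \<open>Written as a minimum so that continuity is evident; \<open>greedy_sol_eq\<close> gives the piecewise form.\<close>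
definition greedy_sol :: "nat \<Rightarrow> (nat \<Rightarrow> real) \<Rightarrow> real \<Rightarrow> nat \<Rightarrow> real" where
  "greedy_sol N x0 t i = min (free_sol N x0 i t) (water_level N x0 t)"

lemma continuous_on_Max_image:
  fixes f :: "'b \<Rightarrow> 'a::topological_space \<Rightarrow> real"
  assumes "finite A" and "A \<noteq> {}" and "\<And>a. a \<in> A \<Longrightarrow> continuous_on S (f a)"
  shows "continuous_on S (\<lambda>t. Max ((\<lambda>a. f a t) ` A))"
  using assms
proof (induction A rule: finite_ne_induct)
  case (insert x F)
  then have "(\<lambda>t. Max ((\<lambda>a. f a t) ` insert x F)) = (\<lambda>t. max (f x t) (Max ((\<lambda>a. f a t) ` F)))"
    by (auto simp: Max_insert)
  with insert show ?case by (auto intro!: continuous_on_max)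
qed simp

lemma continuous_on_greedy_sol:
  assumes "2 \<le> N"
  shows "continuous_on S (\<lambda>t. greedy_sol N x0 t i)"
proof -
  have "continuous_on S (level N x0 k)" for k
    unfolding level_def[abs_def] mean_sol_def free_sol_def divide_inverse
    by (intro continuous_intros)
  then have "continuous_on S (water_level N x0)"
    unfolding water_level_def[abs_def] using assms by (intro continuous_on_Max_image) auto
  then show ?thesis unfolding greedy_sol_def[abs_def] free_sol_def
    using assms by (intro continuous_intros) auto
qed

locale sorted_datum =
  fixes N :: nat and x0 :: "nat \<Rightarrow> real"
  assumes N_ge_2: "2 \<le> N" and pmean_pos: "0 < pmean N x0"
    and antimono: "\<And>i j. 1 \<le> i \<Longrightarrow> i \<le> j \<Longrightarrow> j \<le> N \<Longrightarrow> x0 j \<le> x0 i"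
begin

lemma switch_arg_ge_1:
  assumes "l \<le> N"
  shows "1 \<le> switch_arg N x0 l"
proof -
  have "0 \<le> (\<Sum>j=1..l-1. x0 j - x0 l)" using antimono assms by (intro sum_nonneg) auto
  then show ?thesis using N_ge_2 pmean_pos unfolding switch_arg_def by simp
qed

lemma free_sol_antimono:
  assumes "1 \<le> i" and "i \<le> j" and "j \<le> N"
  shows "free_sol N x0 j t \<le> free_sol N x0 i t"
  unfolding free_sol_def using antimono[OF assms] by simp

lemma level_le_free_sol:
  assumes k: "k \<in> {1..N}" and "tsw N x0 k \<le> t"
  shows "level N x0 k t \<le> free_sol N x0 k t"
proof -
  have k': "Suc (k - 1) = k" "k - 1 < N" using k by auto
  have "switch_arg N x0 k \<le> exp ((real N - 1) * t / real N)"
    using assms tsw_le_iff[OF N_ge_2, of k] switch_arg_ge_1[of k] by simp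
  then have "0 \<le> exp (- t) * (real N * pmean N x0 / (real N - 1))
      * (exp ((real N - 1) * t / real N) - switch_arg N x0 k)"
    using pmean_pos N_ge_2 by (intro mult_nonneg_nonneg) auto
  also have "\<dots> = real (k - 1) * free_sol N x0 k t + (\<Sum>i=k..N. free_sol N x0 i t)
      - real N * mean_sol N x0 t"
    using free_sol_excess_eq[OF N_ge_2 k'(2), of x0 t] pmean_pos unfolding k'(1) by simp
  also have "\<dots> = real k * free_sol N x0 k t
      - (real N * mean_sol N x0 t - (\<Sum>i=Suc k..N. free_sol N x0 i t))"
    using k sum.atLeast_Suc_atMost[of k N "\<lambda>i. free_sol N x0 i t"] by (simp add: of_nat_diff algebra_simps)
  also have "\<dots> = real k * (free_sol N x0 k t - level N x0 k t)"
    using k by (simp add: of_nat_mult_level right_diff_distrib)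
  finally show ?thesis using k by (simp add: zero_le_mult_iff)
qed

lemma free_sol_Suc_le_level:
  assumes k: "k \<in> {1..<N}" and "t \<le> tsw N x0 (Suc k)"
  shows "free_sol N x0 (Suc k) t \<le> level N x0 k t"
proof -
  have "exp ((real N - 1) * t / real N) \<le> switch_arg N x0 (Suc k)"
    using assms le_tsw_iff[OF N_ge_2, of "Suc k"] switch_arg_ge_1[of "Suc k"] by simp
  then have "exp (- t) * (real N * pmean N x0 / (real N - 1))
      * (exp ((real N - 1) * t / real N) - switch_arg N x0 (Suc k)) \<le> 0"
    using pmean_pos N_ge_2 by (intro mult_nonneg_nonpos) auto
  also have "exp (- t) * (real N * pmean N x0 / (real N - 1))
      * (exp ((real N - 1) * t / real N) - switch_arg N x0 (Suc k))
    = real k * free_sol N x0 (Suc k) t - real k * level N x0 k t"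
    using free_sol_excess_eq[OF N_ge_2, of k x0 t] k pmean_pos by (simp add: of_nat_mult_level)
  finally show ?thesis using k by simp
qed

text \<open>Before \<open>t\<^sub>l\<^sub>+\<^sub>1\<close> the free agents stay below the level of the group \<open>1..l\<close>, so the
  terminal state has water-filling shape.\<close>
lemma optimal_if_leaders_merged:
  assumes l: "l \<in> {1..N}" and "0 \<le> T" and before: "l < N \<Longrightarrow> T \<le> tsw N x0 (Suc l)"
    and adm: "admissible N T x0 \<alpha> \<xi>"
    and merged: "\<forall>i\<in>{1..l}. \<xi> T i = pmean l (\<xi> T)"
    and free: "\<forall>t\<in>{0..T}. \<forall>i\<in>{Suc l..N}. \<alpha> t i = 0"
  shows "optimal N T x0 \<alpha> \<xi>"
proof -
  have T: "T \<in> {0..T}" using \<open>0 \<le> T\<close> by simp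
  have \<xi>_free: "\<xi> T i = free_sol N x0 i T" if "i \<in> {Suc l..N}" for i
    using solves_eq_free_sol[OF N_ge_2 adm _ _ T] free that l by auto
  have "(\<Sum>i=1..N. \<xi> T i) = real N * mean_sol N x0 T"
    using solves_pmean_eq_mean_sol[OF _ adm T] N_ge_2 by (simp add: pmean_def divide_eq_eq mult.commute)
  then have "real l * pmean l (\<xi> T) = real l * level N x0 l T"
    using sum_atLeastAtMost_split[of 1 l N "\<xi> T"] l \<xi>_free
    by (simp add: pmean_def of_nat_mult_level)
  then have level_eq: "pmean l (\<xi> T) = level N x0 l T" using l by simp
  show ?thesis
  proof (rule optimal_if_water_filling[OF N_ge_2 _ \<open>0 \<le> T\<close> adm, where w = "level N x0 l T"])
    fix i assume i: "i \<in> {1..N}"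
    show "\<xi> T i = level N x0 l T \<or> (\<xi> T i = free_sol N x0 i T \<and> free_sol N x0 i T \<le> level N x0 l T)"
    proof (cases "i \<le> l")
      case False
      then have "free_sol N x0 i T \<le> free_sol N x0 (Suc l) T"
        using i free_sol_antimono[of "Suc l" i] by simp
      also have "\<dots> \<le> level N x0 l T"
        using free_sol_Suc_le_level[of l] before l False i by simp
      finally show ?thesis using \<xi>_free False i by simp
    qed (use merged level_eq i in simp)
  qed (use pmean_pos in simp)
qed

lemma
  assumes "0 \<le> t"
  shows active_count_mem: "active_count N x0 t \<in> {1..N}"
    and tsw_active_count_le: "tsw N x0 (active_count N x0 t) \<le> t"
    and less_tsw_Suc_active_count:
      "active_count N x0 t < N \<Longrightarrow> t < tsw N x0 (Suc (active_count N x0 t))"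
proof -
  define S where "S = {l\<in>{1..N}. tsw N x0 l \<le> t}"
  have "finite S" "1 \<in> S" unfolding S_def using N_ge_2 assms by (auto simp: tsw_def)
  then have K: "active_count N x0 t \<in> S" and max: "\<And>l. l \<in> S \<Longrightarrow> l \<le> active_count N x0 t"
    unfolding active_count_def S_def[symmetric] by (auto intro: Max_in Max_ge)
  then show "active_count N x0 t \<in> {1..N}" "tsw N x0 (active_count N x0 t) \<le> t"
    unfolding S_def by auto
  assume "active_count N x0 t < N"
  then have "Suc (active_count N x0 t) \<notin> S" using max by fastforce
  with \<open>active_count N x0 t < N\<close> show "t < tsw N x0 (Suc (active_count N x0 t))"
    unfolding S_def by auto
qed

lemma level_active_count_le_free_sol:
  assumes "0 \<le> t" and "1 \<le> i" and "i \<le> active_count N x0 t"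
  shows "level N x0 (active_count N x0 t) t \<le> free_sol N x0 i t"
  using level_le_free_sol[OF active_count_mem tsw_active_count_le] free_sol_antimono[OF assms(2,3)]
    active_count_mem[OF \<open>0 \<le> t\<close>] assms(1) by (meson atLeastAtMost_iff order_trans)

lemma free_sol_le_level_active_count:
  assumes "0 \<le> t" and "active_count N x0 t < i" and "i \<le> N"
  shows "free_sol N x0 i t \<le> level N x0 (active_count N x0 t) t"
proof -
  have "active_count N x0 t \<in> {1..<N}" using active_count_mem[OF \<open>0 \<le> t\<close>] assms by auto
  with less_tsw_Suc_active_count[OF \<open>0 \<le> t\<close>] have
    "free_sol N x0 (Suc (active_count N x0 t)) t \<le> level N x0 (active_count N x0 t) t"
    by (intro free_sol_Suc_le_level) auto
  moreover have "free_sol N x0 i t \<le> free_sol N x0 (Suc (active_count N x0 t)) t"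
    using assms by (intro free_sol_antimono) auto
  ultimately show ?thesis by simp
qed

lemma level_le_level_active_count:
  assumes "0 \<le> t" and j: "j \<in> {1..N}"
  shows "level N x0 j t \<le> level N x0 (active_count N x0 t) t"
proof -
  define k where "k = active_count N x0 t"
  define w where "w = level N x0 k t"
  have k: "k \<in> {1..N}" unfolding k_def using active_count_mem[OF \<open>0 \<le> t\<close>] .
  txt \<open>Passing from \<open>k\<close> to \<open>j\<close> agents changes \<open>real k * level k\<close> by the free values of the agents in
    between, which lie below \<open>w\<close> for agents after \<open>k\<close> and above \<open>w\<close> for agents up to \<open>k\<close>.\<close>
  have "real j * level N x0 j t \<le> real j * w"
  proof (cases "k \<le> j")
    case True
    have "(\<Sum>i=Suc k..j. free_sol N x0 i t) \<le> of_nat (card {Suc k..j}) * w"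
      using free_sol_le_level_active_count[OF \<open>0 \<le> t\<close>] j
      by (intro sum_bounded_above) (auto simp: k_def w_def)
    moreover have "real j * level N x0 j t = real k * w + (\<Sum>i=Suc k..j. free_sol N x0 i t)"
      using sum_atLeastAtMost_split[of "Suc k" j N "\<lambda>i. free_sol N x0 i t"] True j k
      by (simp add: w_def of_nat_mult_level)
    ultimately show ?thesis using True by (simp add: of_nat_diff algebra_simps)
  next
    case False
    have "of_nat (card {Suc j..k}) * w \<le> (\<Sum>i=Suc j..k. free_sol N x0 i t)"
      using level_active_count_le_free_sol[OF \<open>0 \<le> t\<close>]
      by (intro sum_bounded_below) (auto simp: k_def w_def)
    moreover have "real k * w = real j * level N x0 j t + (\<Sum>i=Suc j..k. free_sol N x0 i t)"
      using sum_atLeastAtMost_split[of "Suc j" k N "\<lambda>i. free_sol N x0 i t"] False j k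
      by (simp add: w_def of_nat_mult_level)
    ultimately show ?thesis using False by (simp add: of_nat_diff algebra_simps)
  qed
  then show ?thesis using j by (simp add: w_def k_def)
qed

lemma water_level_eq:
  assumes "0 \<le> t"
  shows "water_level N x0 t = level N x0 (active_count N x0 t) t"
  unfolding water_level_def
  by (rule Max_eqI) (use level_le_level_active_count active_count_mem assms in auto)

lemma greedy_sol_eq:
  assumes "0 \<le> t" and "i \<in> {1..N}"
  shows "greedy_sol N x0 t i =
    (if i \<le> active_count N x0 t then level N x0 (active_count N x0 t) t else free_sol N x0 i t)"
  unfolding greedy_sol_def water_level_eq[OF \<open>0 \<le> t\<close>]
  using level_active_count_le_free_sol[OF \<open>0 \<le> t\<close>] free_sol_le_level_active_count[OF \<open>0 \<le> t\<close>]
    assms(2) by auto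

lemma pmean_greedy_sol:
  assumes "0 \<le> t"
  shows "pmean N (greedy_sol N x0 t) = mean_sol N x0 t"
proof -
  define k where "k = active_count N x0 t"
  have k: "k \<in> {1..N}" unfolding k_def using active_count_mem[OF assms] .
  have "(\<Sum>i=1..N. greedy_sol N x0 t i) = (\<Sum>i=1..k. level N x0 k t) + (\<Sum>i=Suc k..N. free_sol N x0 i t)"
    using sum_atLeastAtMost_split[of 1 k N "greedy_sol N x0 t"] k
    by (simp add: greedy_sol_eq[OF assms] k_def)
  also have "\<dots> = real N * mean_sol N x0 t" using k by (simp add: of_nat_mult_level)
  finally show ?thesis using N_ge_2 by (simp add: pmean_def)
qed

lemma greedy_sol_0:
  assumes i: "i \<in> {1..N}"
  shows "greedy_sol N x0 0 i = x0 i"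
proof -
  define k where "k = active_count N x0 0"
  define w where "w = level N x0 k 0"
  have k: "k \<in> {1..N}" unfolding k_def using active_count_mem[of 0] by simp
  have free_sol_0: "free_sol N x0 j 0 = x0 j" for j unfolding free_sol_def by simp
  show ?thesis
  proof (cases "i \<le> k")
    case True
    txt \<open>At time \<open>0\<close> the agents \<open>1..k\<close> have values \<open>\<ge> w\<close> and sum \<open>k * w\<close>, so all equal \<open>w\<close>.\<close>
    have ge: "w \<le> x0 j" if "j \<in> {1..k}" for j
      using level_active_count_le_free_sol[of 0 j] that free_sol_0 unfolding w_def k_def by auto
    have "real N * mean_sol N x0 0 = (\<Sum>j=1..N. x0 j)"
      using N_ge_2 unfolding mean_sol_def pmean_def by simp
    then have "(\<Sum>j=1..k. x0 j - w) = 0"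
      using sum_atLeastAtMost_split[of 1 k N x0] k of_nat_mult_level[of k N x0 0]
      by (simp add: free_sol_0 w_def sum_subtractf)
    then have "x0 i = w" using ge True i by (subst (asm) sum_nonneg_eq_0_iff) auto
    then show ?thesis using greedy_sol_eq[of 0 i] i True unfolding k_def w_def by simp
  qed (use greedy_sol_eq[of 0 i] i free_sol_0 in \<open>simp add: k_def\<close>)
qed

lemma active_count_locally_constant:
  assumes "0 < x" and "x \<notin> tsw N x0 ` {1..N}"
  obtains d where "0 < d" and "\<And>s. dist s x < d \<Longrightarrow> 0 < s \<and> active_count N x0 s = active_count N x0 x"
proof
  define d where "d = min x (Min ((\<lambda>l. \<bar>x - tsw N x0 l\<bar>) ` {1..N}))"
  show "0 < d" unfolding d_def using assms N_ge_2 by (auto simp: Min_gr_iff)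
  fix s assume "dist s x < d"
  then have sx: "\<bar>s - x\<bar> < x" "\<And>l. l \<in> {1..N} \<Longrightarrow> \<bar>s - x\<bar> < \<bar>x - tsw N x0 l\<bar>"
    unfolding d_def dist_real_def by auto
  then have "{l\<in>{1..N}. tsw N x0 l \<le> s} = {l\<in>{1..N}. tsw N x0 l \<le> x}" by force
  then show "0 < s \<and> active_count N x0 s = active_count N x0 x"
    using sx(1) unfolding active_count_def by auto
qed

lemma greedy_sol_has_real_derivative:
  assumes x: "0 < x" "x \<notin> tsw N x0 ` {1..N}" and i: "i \<in> {1..N}"
  shows "((\<lambda>s. greedy_sol N x0 s i) has_real_derivative
    - greedy_sol N x0 x i + (1 - greedy N x0 x i) * pmean N (greedy_sol N x0 x)) (at x)"
proof -
  obtain d where "0 < d" and near: "\<And>s. dist s x < d \<Longrightarrow> 0 < s \<and> active_count N x0 s = active_count N x0 x"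
    using active_count_locally_constant[OF x] by blast
  define k where "k = active_count N x0 x"
  have k: "k \<in> {1..N}" unfolding k_def using active_count_mem x by simp
  define F where "F = (if i \<le> k then level N x0 k else free_sol N x0 i)"
  have F_eq: "F s = greedy_sol N x0 s i" if "s \<in> ball x d" for s
  proof -
    have "0 < s" "active_count N x0 s = k" using near[of s] that by (auto simp: dist_commute k_def)
    then show ?thesis using greedy_sol_eq[of s i] i by (simp add: F_def)
  qed
  have "(F has_real_derivative - F x + (1 - greedy N x0 x i) * mean_sol N x0 x) (at x)"
  proof (cases "i \<le> k")
    case True
    then show ?thesis using level_has_real_derivative[OF N_ge_2 k, of x0 x] i
      by (simp add: F_def greedy_eq_active_count k_def[symmetric])
  next
    case False
    then show ?thesis using free_sol_has_real_derivative[OF N_ge_2, of x0 i x] i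
      by (simp add: F_def greedy_eq_active_count k_def[symmetric])
  qed
  moreover have "F x = greedy_sol N x0 x i" using F_eq \<open>0 < d\<close> by simp
  moreover have "mean_sol N x0 x = pmean N (greedy_sol N x0 x)" using pmean_greedy_sol x by simp
  ultimately have "(F has_real_derivative
      - greedy_sol N x0 x i + (1 - greedy N x0 x i) * pmean N (greedy_sol N x0 x)) (at x)"
    by simp
  then show ?thesis
    by (rule has_field_derivative_transform_within_open[where S = "ball x d"])
      (use F_eq \<open>0 < d\<close> in simp_all)
qed

lemma greedy_solves: "solves N T (greedy N x0) (greedy_sol N x0)"
  unfolding solves_def
proof (intro ballI)
  fix t i assume t: "t \<in> {0..T}" and i: "i \<in> {1..N}"
  have "0 \<in> tsw N x0 ` {1..N}"
    using N_ge_2 by (intro image_eqI[of _ _ 1]) (auto simp: tsw_def)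
  have "((\<lambda>s. - greedy_sol N x0 s i + (1 - greedy N x0 s i) * pmean N (greedy_sol N x0 s))
      has_integral ((\<lambda>s. greedy_sol N x0 s i) t - (\<lambda>s. greedy_sol N x0 s i) 0)) {0..t}"
  proof (rule fundamental_theorem_of_calculus_strong[where S = "tsw N x0 ` {1..N}"])
    fix x assume x: "x \<in> {0..t} - tsw N x0 ` {1..N}"
    with \<open>0 \<in> tsw N x0 ` {1..N}\<close> have "0 < x" by (cases "x = 0") auto
    with x greedy_sol_has_real_derivative[OF _ _ i] show "((\<lambda>s. greedy_sol N x0 s i) has_vector_derivative
        - greedy_sol N x0 x i + (1 - greedy N x0 x i) * pmean N (greedy_sol N x0 x)) (at x)"
      by (simp add: has_real_derivative_iff_has_vector_derivative)
  qed (use t continuous_on_greedy_sol[OF N_ge_2] in auto)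
  then show "((\<lambda>s. - greedy_sol N x0 s i + (1 - greedy N x0 s i) * pmean N (greedy_sol N x0 s))
      has_integral greedy_sol N x0 t i - greedy_sol N x0 0 i) {0..t}"
    by simp
qed

lemma greedy_full_strength: "full_strength N T (greedy N x0)"
  unfolding full_strength_def
proof (intro conjI ballI)
  fix i
  have "(\<lambda>t. active_count N x0 t) \<in> measurable (restrict_space lborel {0..T}) (count_space UNIV)"
    unfolding active_count_def by (intro measurable_Max_nat measurable_restrict_space1) measurable
  then show "(\<lambda>t. greedy N x0 t i) \<in> borel_measurable (restrict_space lborel {0..T})"
    unfolding greedy_eq_active_count by (rule measurable_compose[where f = "\<lambda>t. active_count N x0 t"]) simp
next
  fix t assume "t \<in> {0..T}"
  then have k: "active_count N x0 t \<in> {1..N}" using active_count_mem by simp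
  then show "0 \<le> greedy N x0 t i" "greedy N x0 t i \<le> 1" for i
    by (simp_all add: greedy_eq_active_count)
  have "(\<Sum>i=1..N. greedy N x0 t i) = (\<Sum>i=1..active_count N x0 t. 1 / real (active_count N x0 t))"
    using k by (intro sum.mono_neutral_cong_right) (auto simp: greedy_eq_active_count)
  then show "(\<Sum>i=1..N. greedy N x0 t i) = 1" using k by simp
qed

lemma greedy_optimal:
  assumes "0 \<le> T"
  shows "optimal N T x0 (greedy N x0) (greedy_sol N x0)"
proof (rule optimal_if_water_filling[where w = "level N x0 (active_count N x0 T) T"])
  show "admissible N T x0 (greedy N x0) (greedy_sol N x0)"
    using greedy_full_strength greedy_solves greedy_sol_0 by simp
  fix i assume "i \<in> {1..N}"
  then show "greedy_sol N x0 T i = level N x0 (active_count N x0 T) T \<or>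
      greedy_sol N x0 T i = free_sol N x0 i T \<and> free_sol N x0 i T \<le> level N x0 (active_count N x0 T) T"
    using greedy_sol_eq[OF assms] free_sol_le_level_active_count[OF assms] by simp
qed (use N_ge_2 pmean_pos assms in simp_all)

end

theorem theorem5:
  fixes N :: nat and T :: real and \<xi>0 :: "nat \<Rightarrow> real"
  assumes "N \<ge> 2" and "T > 0" and "pmean N \<xi>0 > 0"
    and "\<forall>i j. 1 \<le> i \<and> i \<le> j \<and> j \<le> N \<longrightarrow> \<xi>0 j \<le> \<xi>0 i"
  shows
   "(\<forall>l\<in>{1..N-1}. tsw N \<xi>0 l \<le> T \<and> T < tsw N \<xi>0 (l+1) \<longrightarrow>
      (\<forall>\<alpha> \<xi>. full_strength N T \<alpha> \<and> solves N T \<alpha> \<xi> \<and> (\<forall>i\<in>{1..N}. \<xi> 0 i = \<xi>0 i)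
         \<and> (\<forall>i\<in>{1..l}. \<xi> T i = pmean l (\<xi> T))
         \<and> (\<forall>t\<in>{0..T}. (\<Sum>i=1..l. \<alpha> t i) = 1 \<and> (\<forall>i\<in>{l+1..N}. \<alpha> t i = 0))
         \<longrightarrow> optimal N T \<xi>0 \<alpha> \<xi>))
    \<and> (tsw N \<xi>0 N \<le> T \<longrightarrow>
      (\<forall>\<alpha> \<xi>. full_strength N T \<alpha> \<and> solves N T \<alpha> \<xi> \<and> (\<forall>i\<in>{1..N}. \<xi> 0 i = \<xi>0 i)
         \<and> (\<forall>i\<in>{1..N}. \<xi> T i = pmean N (\<xi> T))
         \<longrightarrow> optimal N T \<xi>0 \<alpha> \<xi>))
    \<and> (\<exists>\<xi>. optimal N T \<xi>0 (greedy N \<xi>0) \<xi>)"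
proof -
  interpret sorted_datum N \<xi>0 using assms by unfold_locales auto
  have "0 \<le> T" using \<open>T > 0\<close> by simp
  show ?thesis
  proof (intro conjI ballI impI allI)
    fix l \<alpha> \<xi> assume l: "l \<in> {1..N-1}" and "tsw N \<xi>0 l \<le> T \<and> T < tsw N \<xi>0 (l+1)"
      and "full_strength N T \<alpha> \<and> solves N T \<alpha> \<xi> \<and> (\<forall>i\<in>{1..N}. \<xi> 0 i = \<xi>0 i)
         \<and> (\<forall>i\<in>{1..l}. \<xi> T i = pmean l (\<xi> T))
         \<and> (\<forall>t\<in>{0..T}. (\<Sum>i=1..l. \<alpha> t i) = 1 \<and> (\<forall>i\<in>{l+1..N}. \<alpha> t i = 0))"
    then show "optimal N T \<xi>0 \<alpha> \<xi>"
      using \<open>0 \<le> T\<close> by (intro optimal_if_leaders_merged[of l]) auto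
  next
    fix \<alpha> \<xi> assume "full_strength N T \<alpha> \<and> solves N T \<alpha> \<xi> \<and> (\<forall>i\<in>{1..N}. \<xi> 0 i = \<xi>0 i)
         \<and> (\<forall>i\<in>{1..N}. \<xi> T i = pmean N (\<xi> T))"
    then show "optimal N T \<xi>0 \<alpha> \<xi>"
      using \<open>0 \<le> T\<close> N_ge_2 by (intro optimal_if_leaders_merged[of N]) auto
  qed (use greedy_optimal[OF \<open>0 \<le> T\<close>] in blast)
qed

end
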